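(* Suppose that a filtered vector space $V$ has positive Harder and Narasimhan data $\operatorname{HN}(\overrightarrow{\mu},\overrightarrow{r})$. Fixing a nonnegative integer $z \geq 0$, for each nonnegative integer $m \geq 0$, let $H^{\# S_{m,z}(\overrightarrow{\mu})}$ be the subspace of $V^{\otimes m}$ given by $$H^{\# S_{m,z}(\overrightarrow{\mu})} := \sum_{i=1}^{\# S_{m,z}(\overrightarrow{\mu})} \bigotimes_{j=1}^m V_{a_{ji}}.$$ Then $$\lim_{m \to \infty} \frac{\dim H^{\# S_{m,z}(\overrightarrow{\mu})}}{\dim V^{\otimes m}} = 1.$$
   Context: All vector spaces are over a fixed algebraically closed field $\mathbf{k}$ of characteristic zero. $V$ is a finite dimensional $\mathbf{k}$-vector space with a filtration (in the sense of Faltings and Wüstholz) $V = F^{\lambda_0}V \supsetneq F^{\lambda_1}V \supsetneq \dots \supsetneq F^{\lambda_n}V \supsetneq F^{\lambda_{n+1}}V = 0$, for real numbers $0 \leq \lambda_0 < \lambda_1 < \dots < \lambda_{n+1}$; slopes $\mu(\cdot)$ of subspaces and subquotients are computed with respect to the induced filtration. By Faltings–Wüstholz, $V$ admits a canonical Harder and Narasimhan filtration $0 = V_0 \subsetneq V_1 \subsetneq \dots \subsetneq V_\ell = V$ whose successive quotients $V_i/V_{i-1}$ are semistable with strictly decreasing slopes. Put $\mu_i := \mu(V_i/V_{i-1})$, $r_i := \dim(V_i/V_{i-1})$, $d_i := r_i\mu_i$ for $i=1,\dots,\ell$, $\overrightarrow{\mu} = (\mu_1,\dots,\mu_\ell)$,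 $\overrightarrow{r} = (r_1,\dots,r_\ell)$; this is the Harder and Narasimhan data $\operatorname{HN}(\overrightarrow{\mu},\overrightarrow{r})$, called positive if $\sum_{i=1}^\ell d_i > 0$. Let $[\ell] := \{1,\dots,\ell\}$. For $\mathbf{a} = (a_1,\dots,a_m) \in [\ell]^m$ set $v_{\overrightarrow{\mu}}(\mathbf{a}) := \sum_{j=1}^m \mu_{a_j}$, and $S_{m,z}(\overrightarrow{\mu}) := \{\mathbf{a} \in [\ell]^m : \sum_{j=1}^m \mu_{a_j} \geq z\}$. Write the elements of $[\ell]^m$ in decreasing order with respect to $v_{\overrightarrow{\mu}}(\cdot)$ as $\mathbf{a}_i = (a_{1i},\dots,a_{mi})$, $i = 1, 2, \dots$; thus $S_{m,z}(\overrightarrow{\mu})$ consists of the first $\# S_{m,z}(\overrightarrow{\mu})$ elements $\mathbf{a}_1,\dots,\mathbf{a}_{\# S_{m,z}(\overrightarrow{\mu})}$. *)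

theory Defs
  imports Complex_Main "HOL-Computational_Algebra.Polynomial" "HOL-Library.Function_Algebras"
begin

(* Vector spaces are modelled concretely as spaces of 'k-valued functions
   (coordinates w.r.t. a chosen basis); scalar multiplication is pointwise. *)

definition scl :: "'k::field \<Rightarrow> ('a \<Rightarrow> 'k) \<Rightarrow> ('a \<Rightarrow> 'k)" where
  "scl c f = (\<lambda>x. c * f x)"

abbreviation fsubspace :: "('a \<Rightarrow> 'k::field) set \<Rightarrow> bool" where
  "fsubspace \<equiv> module.subspace scl"

abbreviation fspan :: "('a \<Rightarrow> 'k::field) set \<Rightarrow> ('a \<Rightarrow> 'k) set" where
  "fspan \<equiv> module.span scl"

abbreviation fdim :: "('a \<Rightarrow> 'k::field) set \<Rightarrow> nat" where
  "fdim \<equiv> vector_space.dim scl"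

definition ssum :: "('a \<Rightarrow> 'k::field) set \<Rightarrow> ('a \<Rightarrow> 'k) set \<Rightarrow> ('a \<Rightarrow> 'k) set" where
  "ssum A B = {x + y | x y. x \<in> A \<and> y \<in> B}"

definition alg_closed :: "'k::field itself \<Rightarrow> bool" where
  "alg_closed _ \<longleftrightarrow> (\<forall>p :: 'k poly. degree p \<ge> 1 \<longrightarrow> (\<exists>x. poly p x = 0))"

(* A Faltings--Wuestholz filtration of V = ('n => 'k):
   V = F 0 \<supsetneq> F 1 \<supsetneq> ... \<supsetneq> F n \<supsetneq> F (n+1) = 0,
   where F i = F^{lam i}V and 0 \<le> lam 0 < lam 1 < ... < lam (n+1). *)
definition is_filtration ::
  "nat \<Rightarrow> (nat \<Rightarrow> real) \<Rightarrow> (nat \<Rightarrow> ('n \<Rightarrow> 'k::field) set) \<Rightarrow> bool" where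
  "is_filtration n lam F \<longleftrightarrow>
     0 \<le> lam 0 \<and> (\<forall>i\<le>n. lam i < lam (Suc i)) \<and>
     (\<forall>i\<le>Suc n. fsubspace (F i)) \<and>
     F 0 = UNIV \<and> (\<forall>i\<le>n. F (Suc i) \<subset> F i) \<and> F (Suc n) = {0}"

(* degree of the subquotient W/U (U \<subseteq> W) with the induced filtration
   F^{lam i}(W/U) = ((F^{lam i}V \<inter> W) + U)/U *)
definition subq_deg ::
  "nat \<Rightarrow> (nat \<Rightarrow> real) \<Rightarrow> (nat \<Rightarrow> ('n \<Rightarrow> 'k::field) set) \<Rightarrow> ('n \<Rightarrow> 'k) set \<Rightarrow> ('n \<Rightarrow> 'k) set \<Rightarrow> real" where
  "subq_deg n lam F W U =
     (\<Sum>i\<le>n. lam i * (real (fdim (ssum (F i \<inter> W) U)) - real (fdim (ssum (F (Suc i) \<inter> W) U))))"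

definition subq_slope ::
  "nat \<Rightarrow> (nat \<Rightarrow> real) \<Rightarrow> (nat \<Rightarrow> ('n \<Rightarrow> 'k::field) set) \<Rightarrow> ('n \<Rightarrow> 'k) set \<Rightarrow> ('n \<Rightarrow> 'k) set \<Rightarrow> real" where
  "subq_slope n lam F W U = subq_deg n lam F W U / (real (fdim W) - real (fdim U))"

definition subq_semistable ::
  "nat \<Rightarrow> (nat \<Rightarrow> real) \<Rightarrow> (nat \<Rightarrow> ('n \<Rightarrow> 'k::field) set) \<Rightarrow> ('n \<Rightarrow> 'k) set \<Rightarrow> ('n \<Rightarrow> 'k) set \<Rightarrow> bool" where
  "subq_semistable n lam F W U \<longleftrightarrow>
     (\<forall>X. fsubspace X \<and> U \<subset> X \<and> X \<subseteq> W \<longrightarrow> subq_slope n lam F X U \<le> subq_slope n lam F W U)"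

definition is_HN_filtration ::
  "nat \<Rightarrow> (nat \<Rightarrow> real) \<Rightarrow> (nat \<Rightarrow> ('n \<Rightarrow> 'k::field) set) \<Rightarrow> nat \<Rightarrow> (nat \<Rightarrow> ('n \<Rightarrow> 'k) set) \<Rightarrow> bool" where
  "is_HN_filtration n lam F l Vs \<longleftrightarrow>
     1 \<le> l \<and> (\<forall>i\<le>l. fsubspace (Vs i)) \<and> Vs 0 = {0} \<and> Vs l = UNIV \<and>
     (\<forall>i<l. Vs i \<subset> Vs (Suc i)) \<and>
     (\<forall>i\<in>{1..l}. subq_semistable n lam F (Vs i) (Vs (i - 1))) \<and>
     (\<forall>i\<in>{1..<l}. subq_slope n lam F (Vs (Suc i)) (Vs i) < subq_slope n lam F (Vs i) (Vs (i - 1)))"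

definition HN_mu where
  "HN_mu n lam F Vs i = subq_slope n lam F (Vs i) (Vs (i - 1))"

definition HN_r :: "(nat \<Rightarrow> ('n \<Rightarrow> 'k::field) set) \<Rightarrow> nat \<Rightarrow> nat" where
  "HN_r Vs i = fdim (Vs i) - fdim (Vs (i - 1))"

(* Tensor powers: V^{\<otimes>m} is modelled as functions on index lists (multi-indices);
   the elementary tensor w_1 \<otimes> ... \<otimes> w_m is (i_1..i_m) \<mapsto> \<Prod> w_j(i_j). *)
definition tens :: "('n \<Rightarrow> 'k::field) list \<Rightarrow> ('n list \<Rightarrow> 'k)" where
  "tens ws = (\<lambda>is. if length is = length ws then (\<Prod>j<length ws. (ws ! j) (is ! j)) else 0)"

definition tensor_span :: "('n \<Rightarrow> 'k::field) set list \<Rightarrow> ('n list \<Rightarrow> 'k) set" where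
  "tensor_span Ws = fspan {tens ws | ws. length ws = length Ws \<and> (\<forall>j<length Ws. ws ! j \<in> Ws ! j)}"

definition S_set :: "nat \<Rightarrow> (nat \<Rightarrow> real) \<Rightarrow> nat \<Rightarrow> real \<Rightarrow> nat list set" where
  "S_set l mu m z = {a. length a = m \<and> set a \<subseteq> {1..l} \<and> (\<Sum>j<m. mu (a ! j)) \<ge> z}"

definition H_space :: "nat \<Rightarrow> (nat \<Rightarrow> real) \<Rightarrow> (nat \<Rightarrow> ('n \<Rightarrow> 'k::field) set) \<Rightarrow> nat \<Rightarrow> real \<Rightarrow> ('n list \<Rightarrow> 'k) set" where
  "H_space l mu Vs m z = fspan (\<Union>a\<in>S_set l mu m z. tensor_span (map Vs a))"

end

theory Submission
  imports Defs
begin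

(*
  Choose a basis C of V adapted to the Harder-Narasimhan filtration, so that exactly r_i of its
  vectors lie in V_i but not in V_(i-1), and give such a vector the weight mu_i.  The elementary
  tensors w_1 \<otimes> ... \<otimes> w_m of basis vectors are linearly independent, and each one of total
  weight at least z lies in the summand V_(a_1) \<otimes> ... \<otimes> V_(a_m) of H indexed by the levels
  a_j of the w_j.  So dim H is at least the number of words of length m over C of weight at least
  z, while dim V^(\<otimes>m) is at most (dim V)^m.  The weight of a uniformly random word is a sum of
  m independent weights of mean (\<Sum>i. r_i mu_i) / dim V > 0, so by Chebyshev's inequality all
  but O((dim V)^m / m) words have weight at least z.

  Only the chain 0 = V_0 \<subset> ... \<subset> V_l = V and the positivity of \<Sum>i. r_i mu_i are used;
  semistability, the axioms of the filtration F and algebraic closedness of the field are not.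
*)

section \<open>Chains of subspaces and adapted bases\<close>

lemma chain_subset:
  assumes "\<forall>i<l. B i \<subseteq> B (Suc i)" "i \<le> j" "j \<le> l"
  shows "B i \<subseteq> B j"
  using assms(1,3) by (intro lift_Suc_mono_le_ivl[of "{..<l}" B, OF _ assms(2)]) auto

lemma mem_chain_iff_Least_le:
  assumes "\<forall>i<l. B i \<subseteq> B (Suc i)" "w \<in> B l" "j \<le> l"
  shows "w \<in> B j \<longleftrightarrow> (LEAST i. w \<in> B i) \<le> j"
proof
  show "w \<in> B j \<Longrightarrow> (LEAST i. w \<in> B i) \<le> j"
    by (rule Least_le)
  assume "(LEAST i. w \<in> B i) \<le> j"
  then have "B (LEAST i. w \<in> B i) \<subseteq> B j"
    by (rule chain_subset[OF assms(1) _ assms(3)])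
  moreover have "w \<in> B (LEAST i. w \<in> B i)"
    by (rule LeastI[of "\<lambda>i. w \<in> B i", OF assms(2)])
  ultimately show "w \<in> B j"
    by blast
qed

lemma Least_mem_chain:
  fixes B :: "nat \<Rightarrow> 'a set"
  assumes "B 0 = {}" "w \<in> B l"
  shows "(LEAST i. w \<in> B i) \<in> {1..l}" "w \<in> B (LEAST i. w \<in> B i)"
proof -
  show "w \<in> B (LEAST i. w \<in> B i)"
    by (rule LeastI[of "\<lambda>i. w \<in> B i", OF assms(2)])
  then have "(LEAST i. w \<in> B i) \<noteq> 0"
    using assms(1) by (metis empty_iff)
  moreover have "(LEAST i. w \<in> B i) \<le> l"
    using assms(2) by (rule Least_le)
  ultimately show "(LEAST i. w \<in> B i) \<in> {1..l}"
    by simp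
qed

lemma Least_mem_chain_eq_Diff:
  assumes "\<forall>i<l. B i \<subseteq> B (Suc i)" "i \<in> {1..l}"
  shows "{w \<in> B l. (LEAST j. w \<in> B j) = i} = B i - B (i - 1)"
proof (intro set_eqI)
  fix w
  show "w \<in> {w \<in> B l. (LEAST j. w \<in> B j) = i} \<longleftrightarrow> w \<in> B i - B (i - 1)"
  proof (cases "w \<in> B l")
    case True
    have "w \<in> B i \<longleftrightarrow> (LEAST j. w \<in> B j) \<le> i" "w \<in> B (i - 1) \<longleftrightarrow> (LEAST j. w \<in> B j) \<le> i - 1"
      using mem_chain_iff_Least_le[OF assms(1) True] assms(2) by auto
    then show ?thesis
      using True assms(2) by auto
  next
    case False
    then show ?thesis
      using chain_subset[OF assms(1), of i l] assms(2) by auto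
  qed
qed

context vector_space
begin

lemma card_le_dim_if_finite_span:
  assumes "independent S" "S \<subseteq> V" "V \<subseteq> span W" "finite W"
  shows "card S \<le> dim V"
proof -
  obtain B where B: "S \<subseteq> B" "B \<subseteq> V" "independent B" "V \<subseteq> span B"
    using maximal_independent_subset_extend[OF assms(2,1)] by blast
  have "finite B"
    using independent_span_bound[OF assms(4) B(3)] B(2) assms(3) by auto
  then have "card S \<le> card B"
    using B(1) by (simp add: card_mono)
  also have "card B = dim V"
    using basis_card_eq_dim[OF B(2,4,3)] .
  finally show ?thesis .
qed

lemma dim_mono_if_finite_span:
  assumes "V \<subseteq> T" "T \<subseteq> span W" "finite W"
  shows "dim V \<le> dim T"
proof -
  obtain A where A: "A \<subseteq> V" "independent A" "V \<subseteq> span A" "card A = dim V"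
    by (rule basis_exists)
  then have "A \<subseteq> T"
    using assms(1) by blast
  from card_le_dim_if_finite_span[OF A(2) this assms(2,3)] show ?thesis
    using A(4) by simp
qed

lemma nested_bases_exist:
  assumes "\<And>i. i < l \<Longrightarrow> Vs i \<subseteq> Vs (Suc i)"
  shows "\<exists>B. (\<forall>i\<le>l. B i \<subseteq> Vs i \<and> independent (B i) \<and> Vs i \<subseteq> span (B i))
            \<and> (\<forall>i<l. B i \<subseteq> B (Suc i))"
  using assms
proof (induction l)
  case 0
  obtain B where "B \<subseteq> Vs 0" "independent B" "Vs 0 \<subseteq> span B" "card B = dim (Vs 0)"
    by (rule basis_exists)
  then show ?case
    by (intro exI[of _ "\<lambda>_. B"]) auto
next
  case (Suc l)
  have "\<exists>B. (\<forall>i\<le>l. B i \<subseteq> Vs i \<and> independent (B i) \<and> Vs i \<subseteq> span (B i))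
            \<and> (\<forall>i<l. B i \<subseteq> B (Suc i))"
    by (rule Suc.IH) (simp add: Suc.prems)
  then obtain B where B: "\<forall>i\<le>l. B i \<subseteq> Vs i \<and> independent (B i) \<and> Vs i \<subseteq> span (B i)"
      "\<forall>i<l. B i \<subseteq> B (Suc i)"
    by blast
  have "B l \<subseteq> Vs (Suc l)" "independent (B l)"
    using B(1) Suc.prems[of l] by auto
  then obtain B' where B': "B l \<subseteq> B'" "B' \<subseteq> Vs (Suc l)" "independent B'" "Vs (Suc l) \<subseteq> span B'"
    by (rule maximal_independent_subset_extend)
  define B2 where "B2 = B(Suc l := B')"
  have "B2 i \<subseteq> Vs i \<and> independent (B2 i) \<and> Vs i \<subseteq> span (B2 i)" if "i \<le> Suc l" for i
    using B(1) B' that by (cases "i = Suc l") (auto simp: B2_def)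
  moreover have "B2 i \<subseteq> B2 (Suc i)" if "i < Suc l" for i
    using B(2) B' that by (cases "i = l") (auto simp: B2_def)
  ultimately show ?case
    by blast
qed

lemma adapted_basis_exists:
  assumes "Vs 0 = {0}" "\<And>i. i < l \<Longrightarrow> Vs i \<subseteq> Vs (Suc i)" "Vs l \<subseteq> span W" "finite W"
  obtains C lev where "finite C" "independent C" "C \<subseteq> Vs l" "Vs l \<subseteq> span C"
    "\<And>w. w \<in> C \<Longrightarrow> lev w \<in> {1..l} \<and> w \<in> Vs (lev w)"
    "\<And>i. i \<in> {1..l} \<Longrightarrow> card {w\<in>C. lev w = i} = dim (Vs i) - dim (Vs (i - 1))"
proof -
  obtain B where B_all: "\<forall>i\<le>l. B i \<subseteq> Vs i \<and> independent (B i) \<and> Vs i \<subseteq> span (B i)"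
      and chain: "\<forall>i<l. B i \<subseteq> B (Suc i)"
    using nested_bases_exist[of l Vs] assms(2) by blast
  have B: "B i \<subseteq> Vs i" "independent (B i)" "Vs i \<subseteq> span (B i)" if "i \<le> l" for i
    using B_all that by simp_all
  have "B 0 \<subseteq> {0}" "independent (B 0)"
    using B[of 0] assms(1) by simp_all
  then have "B 0 = {}"
    using dependent_zero by auto
  define lev where "lev w = (LEAST i. w \<in> B i)" for w
  have lev: "lev w \<in> {1..l} \<and> w \<in> Vs (lev w)" if "w \<in> B l" for w
    using Least_mem_chain[OF \<open>B 0 = {}\<close> that] B(1) unfolding lev_def by auto
  have "finite (B l)"
    using independent_span_bound[OF assms(4) B(2)[of l]] B(1)[of l] assms(3) by auto
  have card_fibre: "card {w \<in> B l. lev w = i} = dim (Vs i) - dim (Vs (i - 1))"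
    if i: "i \<in> {1..l}" for i
  proof -
    have "i \<le> l" "i - 1 \<le> l" "i - 1 \<le> i"
      using i by auto
    have "finite (B (i - 1))"
      using finite_subset[OF chain_subset[OF chain \<open>i - 1 \<le> l\<close> order_refl] \<open>finite (B l)\<close>] .
    then have "card (B i - B (i - 1)) = card (B i) - card (B (i - 1))"
      by (rule card_Diff_subset[OF _ chain_subset[OF chain \<open>i - 1 \<le> i\<close> \<open>i \<le> l\<close>]])
    also have "\<dots> = dim (Vs i) - dim (Vs (i - 1))"
      using basis_card_eq_dim[OF B(1,3,2)[OF \<open>i \<le> l\<close>]] basis_card_eq_dim[OF B(1,3,2)[OF \<open>i - 1 \<le> l\<close>]]
      by simp
    finally show ?thesis
      unfolding lev_def Least_mem_chain_eq_Diff[OF chain i] .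
  qed
  show thesis
    using B[of l] lev \<open>finite (B l)\<close> card_fibre by (intro that[of "B l" lev]) simp_all
qed

end

section \<open>Coordinate spaces\<close>

interpretation fun_space: vector_space "scl :: 'k::field \<Rightarrow> ('a \<Rightarrow> 'k) \<Rightarrow> ('a \<Rightarrow> 'k)"
  by unfold_locales (auto simp: scl_def fun_eq_iff algebra_simps)

lemma sum_fun_apply: "(\<Sum>x\<in>A. f x) y = (\<Sum>x\<in>A. f x y)"
  by (induction A rule: infinite_finite_induct) auto

lemma sum_scl_apply: "(\<Sum>x\<in>A. scl (c x) (f x)) y = (\<Sum>x\<in>A. c x * f x y)"
  by (simp add: sum_fun_apply scl_def)

definition delta :: "'a \<Rightarrow> 'a \<Rightarrow> 'k::field" where
  "delta x = (\<lambda>y. if y = x then 1 else 0)"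

lemma inj_delta: "inj (delta :: 'a \<Rightarrow> 'a \<Rightarrow> 'k::field)"
  by (auto simp: inj_def delta_def fun_eq_iff split: if_splits)

lemma in_span_delta_if_support_subset:
  assumes "finite A" "\<And>y. y \<notin> A \<Longrightarrow> f y = 0"
  shows "(f :: 'a \<Rightarrow> 'k::field) \<in> fspan (delta ` A)"
proof -
  have "f = (\<Sum>x\<in>A. scl (f x) (delta x))"
    using assms by (auto simp: fun_eq_iff sum_scl_apply delta_def if_distrib cong: if_cong)
  also have "\<dots> \<in> fspan (delta ` A)"
    by (intro fun_space.span_sum fun_space.span_scale fun_space.span_base) auto
  finally show ?thesis .
qed

lemma independent_delta_image:
  assumes "finite A"
  shows "fun_space.independent ((delta :: 'a \<Rightarrow> 'a \<Rightarrow> 'k::field) ` A)"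
proof (rule fun_space.independent_if_scalars_zero)
  show "finite (delta ` A)"
    using assms by simp
  fix f :: "('a \<Rightarrow> 'k) \<Rightarrow> 'k" and v :: "'a \<Rightarrow> 'k"
  assume sum_0: "(\<Sum>x\<in>delta ` A. scl (f x) x) = 0" and "v \<in> delta ` A"
  then obtain a where a: "a \<in> A" "v = delta a"
    by auto
  have "0 = (\<Sum>x\<in>delta ` A. scl (f x) x) a"
    using sum_0 by simp
  also have "\<dots> = (\<Sum>x\<in>A. f (delta x) * delta x a)"
    by (simp add: sum_scl_apply sum.reindex inj_on_subset[OF inj_delta])
  also have "\<dots> = f (delta a)"
    using assms a by (simp add: delta_def if_distrib cong: if_cong)
  finally show "f v = 0"
    using a by simp
qed

lemma fdim_UNIV: "fdim (UNIV :: ('n::finite \<Rightarrow> 'k::field) set) = card (UNIV :: 'n set)"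
proof -
  have "(UNIV :: ('n \<Rightarrow> 'k) set) \<subseteq> fspan (delta ` UNIV)"
    by (auto intro!: in_span_delta_if_support_subset)
  from fun_space.basis_card_eq_dim[OF subset_UNIV this independent_delta_image]
  have "fdim (UNIV :: ('n \<Rightarrow> 'k) set) = card ((delta :: 'n \<Rightarrow> 'n \<Rightarrow> 'k) ` UNIV)"
    by simp
  also have "\<dots> = card (UNIV :: 'n set)"
    by (simp add: card_image inj_delta)
  finally show ?thesis .
qed

section \<open>Words and elementary tensors\<close>

definition lists_of :: "nat \<Rightarrow> 'a set \<Rightarrow> 'a list set" where
  "lists_of m C = {ws. set ws \<subseteq> C \<and> length ws = m}"

lemma lists_of_0: "lists_of 0 C = {[]}"
  by (auto simp: lists_of_def)

lemma finite_lists_of: "finite C \<Longrightarrow> finite (lists_of m C)"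
  unfolding lists_of_def by (rule finite_lists_length_eq)

lemma card_lists_of: "finite C \<Longrightarrow> card (lists_of m C) = card C ^ m"
  unfolding lists_of_def by (rule card_lists_length_eq)

lemma sum_lists_of_Suc:
  "(\<Sum>ws\<in>lists_of (Suc m) C. f ws) = (\<Sum>ws\<in>lists_of m C. \<Sum>w\<in>C. f (w # ws))"
proof -
  have eq: "lists_of (Suc m) C = (\<lambda>(ws, w). w # ws) ` (lists_of m C \<times> C)"
    unfolding lists_of_def by (rule lists_length_Suc_eq)
  have inj: "inj_on (\<lambda>(ws, w). w # ws) (lists_of m C \<times> C)"
    by (auto simp: inj_on_def)
  show ?thesis
    unfolding eq sum.reindex[OF inj] by (simp add: sum.cartesian_product case_prod_beta)
qed

lemma tens_Nil: "tens [] is = (if is = [] then 1 else 0)"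
  by (simp add: tens_def)

lemma tens_Cons: "tens (w # ws) (i # is) = w i * tens ws is"
  by (simp add: tens_def prod.lessThan_Suc_shift del: prod.lessThan_Suc)

lemma tens_eq_0_if_length_ne: "length is \<noteq> length ws \<Longrightarrow> tens ws is = 0"
  by (simp add: tens_def)

lemma tens_lincomb_eq_0_imp_coeff_eq_0:
  fixes C :: "('n \<Rightarrow> 'k::field) set"
  assumes "finite C" "fun_space.independent C"
    and "(\<Sum>ws\<in>lists_of m C. scl (c ws) (tens ws)) = 0" "ws \<in> lists_of m C"
  shows "c ws = 0"
  using assms(3,4)
proof (induction m arbitrary: c ws)
  case 0
  then have "0 = (\<Sum>ws\<in>lists_of 0 C. scl (c ws) (tens ws)) []"
    by simp
  then show ?case
    using 0 by (simp add: lists_of_0 scl_def tens_Nil)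
next
  case (Suc m)
  obtain w ws' where ws: "ws = w # ws'" "w \<in> C" "ws' \<in> lists_of m C"
    using Suc.prems(2) by (auto simp: lists_of_def length_Suc_conv)
  (* Evaluated at i # is, the combination becomes a combination of the vectors of C. *)
  have lincomb_C: "(\<Sum>v\<in>C. scl (\<Sum>vs\<in>lists_of m C. c (v # vs) * tens vs is) v) = 0" for "is"
  proof
    fix i
    have "0 = (\<Sum>ws\<in>lists_of (Suc m) C. scl (c ws) (tens ws)) (i # is)"
      using Suc.prems(1) by simp
    also have "\<dots> = (\<Sum>vs\<in>lists_of m C. \<Sum>v\<in>C. c (v # vs) * (v i * tens vs is))"
      unfolding sum_scl_apply by (simp add: sum_lists_of_Suc tens_Cons)
    also have "\<dots> = (\<Sum>v\<in>C. scl (\<Sum>vs\<in>lists_of m C. c (v # vs) * tens vs is) v) i"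
      by (subst sum.swap) (simp add: sum_scl_apply sum_distrib_left sum_distrib_right mult_ac)
    finally show "(\<Sum>v\<in>C. scl (\<Sum>vs\<in>lists_of m C. c (v # vs) * tens vs is) v) i = 0 i"
      by simp
  qed
  have "(\<Sum>vs\<in>lists_of m C. c (w # vs) * tens vs is) = 0" for "is"
    using lincomb_C[of "is"] assms(2) ws(2) fun_space.dependent_finite[OF assms(1)] by meson
  then have "(\<Sum>vs\<in>lists_of m C. scl (c (w # vs)) (tens vs)) = 0"
    by (simp add: fun_eq_iff sum_scl_apply)
  from Suc.IH[OF this ws(3)] show ?case
    using ws(1) by simp
qed

lemma inj_on_tens:
  fixes C :: "('n \<Rightarrow> 'k::field) set"
  assumes "finite C" "fun_space.independent C"
  shows "inj_on tens (lists_of m C)"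
proof
  fix a b
  assume ab: "a \<in> lists_of m C" "b \<in> lists_of m C" "tens a = tens b"
  show "a = b"
  proof (rule ccontr)
    assume "a \<noteq> b"
    define c where "c ws = (if ws = a then 1 else if ws = b then -1 else (0::'k))" for ws
    have "(\<Sum>ws\<in>lists_of m C. scl (c ws) (tens ws)) y
        = (\<Sum>ws\<in>lists_of m C. (if ws = a then tens a y else 0) - (if ws = b then tens b y else 0))"
      for y
      unfolding sum_scl_apply using \<open>a \<noteq> b\<close> by (intro sum.cong) (auto simp: c_def)
    then have "(\<Sum>ws\<in>lists_of m C. scl (c ws) (tens ws)) = 0"
      using ab by (simp add: fun_eq_iff sum_subtractf finite_lists_of[OF assms(1)])
    then have "c a = 0"
      using tens_lincomb_eq_0_imp_coeff_eq_0[OF assms] ab(1) by blast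
    then show False
      by (simp add: c_def)
  qed
qed

lemma independent_tens_image:
  fixes C :: "('n \<Rightarrow> 'k::field) set"
  assumes "finite C" "fun_space.independent C"
  shows "fun_space.independent (tens ` lists_of m C)"
proof (rule fun_space.independent_if_scalars_zero)
  show "finite (tens ` lists_of m C)"
    using assms by (simp add: finite_lists_of)
  fix f :: "('n list \<Rightarrow> 'k) \<Rightarrow> 'k" and v :: "'n list \<Rightarrow> 'k"
  assume "(\<Sum>x\<in>tens ` lists_of m C. scl (f x) x) = 0" and "v \<in> tens ` lists_of m C"
  then obtain ws where "(\<Sum>ws\<in>lists_of m C. scl (f (tens ws)) (tens ws)) = 0"
      "ws \<in> lists_of m C" "v = tens ws"
    by (auto simp: sum.reindex[OF inj_on_tens[OF assms]])
  then show "f v = 0"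
    using tens_lincomb_eq_0_imp_coeff_eq_0[OF assms, where c = "\<lambda>ws. f (tens ws)"] by simp
qed

section \<open>Weights of random words\<close>

lemma sum_square_sum_list_lists_of:
  fixes h :: "'a \<Rightarrow> real"
  assumes "finite C" "(\<Sum>w\<in>C. h w) = 0"
  shows "(\<Sum>ws\<in>lists_of m C. (sum_list (map h ws))\<^sup>2) * card C
         = real m * real (card C) ^ m * (\<Sum>w\<in>C. (h w)\<^sup>2)"
proof (induction m)
  case 0
  then show ?case
    by (simp add: lists_of_0)
next
  case (Suc m)
  let ?N = "real (card C)" and ?Q = "\<Sum>w\<in>C. (h w)\<^sup>2"
  let ?S = "\<Sum>ws\<in>lists_of m C. (sum_list (map h ws))\<^sup>2"
  have "(\<Sum>ws\<in>lists_of (Suc m) C. (sum_list (map h ws))\<^sup>2)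
      = (\<Sum>ws\<in>lists_of m C. \<Sum>w\<in>C. (h w)\<^sup>2 + 2 * sum_list (map h ws) * h w + (sum_list (map h ws))\<^sup>2)"
    unfolding sum_lists_of_Suc by (simp add: power2_eq_square algebra_simps)
  also have "\<dots> = (\<Sum>ws\<in>lists_of m C. ?Q + 2 * sum_list (map h ws) * (\<Sum>w\<in>C. h w) + ?N * (sum_list (map h ws))\<^sup>2)"
    by (simp add: sum.distrib sum_distrib_left)
  also have "\<dots> = ?N ^ m * ?Q + ?N * ?S"
    using assms by (simp add: sum.distrib sum_distrib_left card_lists_of)
  finally have "(\<Sum>ws\<in>lists_of (Suc m) C. (sum_list (map h ws))\<^sup>2) * ?N = ?N ^ Suc m * ?Q + ?N * (?S * ?N)"
    by (simp add: algebra_simps)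
  also have "\<dots> = real (Suc m) * ?N ^ Suc m * ?Q"
    using Suc.IH by (simp add: algebra_simps)
  finally show ?case .
qed

lemma card_lists_of_large_deviation_le:
  fixes h :: "'a \<Rightarrow> real"
  assumes "finite C" "(\<Sum>w\<in>C. h w) = 0" "0 \<le> d"
  shows "real (card {ws\<in>lists_of m C. d \<le> \<bar>sum_list (map h ws)\<bar>}) * d\<^sup>2 * card C
         \<le> real m * real (card C) ^ m * (\<Sum>w\<in>C. (h w)\<^sup>2)"
proof -
  let ?D = "{ws\<in>lists_of m C. d \<le> \<bar>sum_list (map h ws)\<bar>}"
  have "real (card ?D) * d\<^sup>2 = (\<Sum>ws\<in>?D. d\<^sup>2)"
    by simp
  also have "\<dots> \<le> (\<Sum>ws\<in>?D. (sum_list (map h ws))\<^sup>2)"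
    using assms(3) by (intro sum_mono) (metis abs_le_square_iff abs_of_nonneg mem_Collect_eq)
  also have "\<dots> \<le> (\<Sum>ws\<in>lists_of m C. (sum_list (map h ws))\<^sup>2)"
    using finite_lists_of[OF assms(1)] by (intro sum_mono2) auto
  finally have "real (card ?D) * d\<^sup>2 * card C \<le> (\<Sum>ws\<in>lists_of m C. (sum_list (map h ws))\<^sup>2) * card C"
    by (rule mult_right_mono) simp
  also have "\<dots> = real m * real (card C) ^ m * (\<Sum>w\<in>C. (h w)\<^sup>2)"
    by (rule sum_square_sum_list_lists_of[OF assms(1,2)])
  finally show ?thesis .
qed

lemma card_lists_of_sum_list_less_le:
  fixes C :: "'a set" and g :: "'a \<Rightarrow> real" and z :: real
  defines "N \<equiv> real (card C)" and "M \<equiv> (\<Sum>w\<in>C. g w)"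
  assumes "finite C" "M > 0" "m > 0" "2 * z * N / M \<le> real m"
  shows "real (card {ws\<in>lists_of m C. sum_list (map g ws) < z}) / N ^ m
         \<le> 4 * N * (\<Sum>w\<in>C. (g w - M / N)\<^sup>2) / (M\<^sup>2 * real m)"
proof -
  define h where "h = (\<lambda>w. g w - M / N)"
  (* A word of length m has mean weight m M / N = 2 d, so a word of weight below z \<le> d
     deviates from the mean by more than d. *)
  define d where "d = real m * M / (2 * N)"
  let ?bad = "{ws\<in>lists_of m C. sum_list (map g ws) < z}"
  let ?far = "{ws\<in>lists_of m C. d \<le> \<bar>sum_list (map h ws)\<bar>}"
  have "C \<noteq> {}"
    using assms(4) by (auto simp: M_def)
  then have "N > 0"
    using assms(3) by (simp add: N_def card_gt_0_iff)
  have "(\<Sum>w\<in>C. h w) = 0"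
    using \<open>N > 0\<close> by (simp add: h_def sum_subtractf M_def N_def)
  have "d > 0" "z \<le> d"
    using assms(4-6) \<open>N > 0\<close> by (simp_all add: d_def field_simps)
  have "sum_list (map h ws) = sum_list (map g ws) - 2 * d" if "ws \<in> lists_of m C" for ws
    using that \<open>N > 0\<close> by (simp add: h_def sum_list_subtractf sum_list_triv lists_of_def d_def)
  then have "?bad \<subseteq> ?far"
    using \<open>z \<le> d\<close> by auto
  then have "card ?bad \<le> card ?far"
    using finite_lists_of[OF assms(3)] by (intro card_mono) auto
  then have "real (card ?bad) * d\<^sup>2 * N \<le> real (card ?far) * d\<^sup>2 * N"
    using \<open>N > 0\<close> by (intro mult_right_mono) auto
  also have "\<dots> \<le> real m * N ^ m * (\<Sum>w\<in>C. (h w)\<^sup>2)"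
    using card_lists_of_large_deviation_le[OF assms(3) \<open>(\<Sum>w\<in>C. h w) = 0\<close>] \<open>d > 0\<close>
    unfolding N_def by simp
  finally show ?thesis
    using assms(4,5) \<open>d > 0\<close> \<open>N > 0\<close> by (simp add: h_def d_def field_simps power2_eq_square)
qed

lemma card_lists_of_filter_ratio:
  assumes "finite C" "C \<noteq> {}"
  shows "real (card {ws\<in>lists_of m C. P ws}) / real (card C) ^ m
         = 1 - real (card {ws\<in>lists_of m C. \<not> P ws}) / real (card C) ^ m"
proof -
  have "card (lists_of m C) = card ({ws\<in>lists_of m C. P ws} \<union> {ws\<in>lists_of m C. \<not> P ws})"
    by (rule arg_cong[where f = card]) auto
  also have "\<dots> = card {ws\<in>lists_of m C. P ws} + card {ws\<in>lists_of m C. \<not> P ws}"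
    using finite_lists_of[OF assms(1), of m] by (intro card_Un_disjoint) auto
  finally have "real (card {ws\<in>lists_of m C. P ws}) + real (card {ws\<in>lists_of m C. \<not> P ws})
      = real (card C) ^ m"
    unfolding card_lists_of[OF assms(1)] by (simp only: of_nat_add[symmetric] of_nat_power[symmetric])
  moreover have "real (card C) ^ m > 0"
    using assms by (simp add: card_gt_0_iff)
  ultimately show ?thesis
    by (simp add: field_simps)
qed

lemma tendsto_card_lists_of_sum_list_ge:
  fixes g :: "'a \<Rightarrow> real" and z :: real
  assumes "finite C" "(\<Sum>w\<in>C. g w) > 0"
  shows "(\<lambda>m. real (card {ws\<in>lists_of m C. z \<le> sum_list (map g ws)}) / real (card C) ^ m)
         \<longlonglongrightarrow> 1"
proof -
  define N where "N = real (card C)"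
  define M where "M = (\<Sum>w\<in>C. g w)"
  define K where "K = 4 * N * (\<Sum>w\<in>C. (g w - M / N)\<^sup>2) / M\<^sup>2"
  let ?bad = "\<lambda>m. real (card {ws\<in>lists_of m C. sum_list (map g ws) < z}) / N ^ m"
  have "C \<noteq> {}"
    using assms(2) by auto
  have "eventually (\<lambda>m. 0 < m \<and> 2 * z * N / M \<le> real m) sequentially"
    by (intro eventually_conj eventually_gt_at_top filterlim_real_sequentially[unfolded filterlim_at_top, rule_format])
  moreover have "?bad m \<le> K / real m" if "0 < m \<and> 2 * z * N / M \<le> real m" for m
  proof -
    have "K / real m = 4 * N * (\<Sum>w\<in>C. (g w - M / N)\<^sup>2) / (M\<^sup>2 * real m)"
      by (simp add: K_def)
    with card_lists_of_sum_list_less_le[OF assms(1), of g m z] assms(2) that show ?thesis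
      unfolding M_def N_def by simp
  qed
  ultimately have "eventually (\<lambda>m. ?bad m \<le> K / real m) sequentially"
    by (rule eventually_mono)
  moreover have "eventually (\<lambda>m. 0 \<le> ?bad m) sequentially"
    by (intro always_eventually allI divide_nonneg_nonneg) (simp_all add: N_def)
  ultimately have "?bad \<longlonglongrightarrow> 0"
    by (intro tendsto_sandwich[OF _ _ tendsto_const lim_const_over_n])
  from tendsto_diff[OF tendsto_const this] have "(\<lambda>m. 1 - ?bad m) \<longlonglongrightarrow> 1"
    by simp
  moreover have "real (card {ws\<in>lists_of m C. z \<le> sum_list (map g ws)}) / N ^ m = 1 - ?bad m" for m
    using card_lists_of_filter_ratio[OF assms(1) \<open>C \<noteq> {}\<close>, of m "\<lambda>ws. z \<le> sum_list (map g ws)"]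
    by (simp add: N_def not_le)
  ultimately show ?thesis
    by (simp add: N_def)
qed

section \<open>Bounds on the dimension of H\<close>

lemma tensor_span_subset_span_delta:
  "tensor_span (Ws :: ('n::finite \<Rightarrow> 'k::field) set list) \<subseteq> fspan (delta ` lists_of (length Ws) UNIV)"
  unfolding tensor_span_def
proof (rule fun_space.span_minimal[OF _ fun_space.subspace_span], safe)
  fix ws :: "('n \<Rightarrow> 'k) list"
  assume "length ws = length Ws"
  then show "tens ws \<in> fspan (delta ` lists_of (length Ws) UNIV)"
    by (intro in_span_delta_if_support_subset finite_lists_of)
      (simp_all add: lists_of_def tens_eq_0_if_length_ne)
qed

lemma tensor_power_subset_span_delta:
  "tensor_span (replicate m (UNIV :: ('n::finite \<Rightarrow> 'k::field) set))
     \<subseteq> fspan (delta ` lists_of m UNIV)"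
  using tensor_span_subset_span_delta[of "replicate m UNIV"] by simp

lemma fdim_tensor_power_le:
  "fdim (tensor_span (replicate m (UNIV :: ('n::finite \<Rightarrow> 'k::field) set))) \<le> card (UNIV :: 'n set) ^ m"
proof -
  have "fdim (tensor_span (replicate m (UNIV :: ('n \<Rightarrow> 'k) set)))
      \<le> card ((delta :: 'n list \<Rightarrow> 'n list \<Rightarrow> 'k) ` lists_of m UNIV)"
    by (rule fun_space.dim_le_card[OF tensor_power_subset_span_delta]) (simp add: finite_lists_of)
  also have "\<dots> \<le> card (lists_of m (UNIV :: 'n set))"
    by (rule card_image_le) (simp add: finite_lists_of)
  finally show ?thesis
    by (simp add: card_lists_of)
qed

lemma H_space_subset_tensor_power:
  "H_space l mu Vs m z \<subseteq> tensor_span (replicate m (UNIV :: ('n \<Rightarrow> 'k::field) set))"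
  unfolding H_space_def
proof (rule fun_space.span_minimal)
  show "fsubspace (tensor_span (replicate m (UNIV :: ('n \<Rightarrow> 'k) set)))"
    unfolding tensor_span_def by (rule fun_space.subspace_span)
  show "(\<Union>a\<in>S_set l mu m z. tensor_span (map Vs a)) \<subseteq> tensor_span (replicate m UNIV)"
  proof (rule UN_least)
    fix a
    assume "a \<in> S_set l mu m z"
    then have "length a = m"
      by (simp add: S_set_def)
    then show "tensor_span (map Vs a) \<subseteq> tensor_span (replicate m UNIV)"
      unfolding tensor_span_def by (intro fun_space.span_mono) auto
  qed
qed

lemma fdim_H_space_le:
  fixes Vs :: "nat \<Rightarrow> ('n::finite \<Rightarrow> 'k::field) set"
  shows "fdim (H_space l mu Vs m z) \<le> fdim (tensor_span (replicate m (UNIV :: ('n \<Rightarrow> 'k) set)))"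
  by (rule fun_space.dim_mono_if_finite_span[OF H_space_subset_tensor_power tensor_power_subset_span_delta])
    (simp add: finite_lists_of)

lemma tens_in_H_space:
  assumes "ws \<in> lists_of m C" "\<And>w. w \<in> C \<Longrightarrow> lev w \<in> {1..l} \<and> w \<in> Vs (lev w)"
    and "z \<le> sum_list (map (\<lambda>w. mu (lev w)) ws)"
  shows "tens ws \<in> H_space l mu Vs m z"
proof -
  have len: "length ws = m" and set: "set ws \<subseteq> C"
    using assms(1) by (auto simp: lists_of_def)
  have "sum_list (map (\<lambda>w. mu (lev w)) ws) = (\<Sum>j<m. mu (map lev ws ! j))"
    by (simp add: sum_list_sum_nth len atLeast0LessThan)
  then have "map lev ws \<in> S_set l mu m z"
    using assms(2,3) len set unfolding S_set_def by (auto simp: subset_iff)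
  moreover have "tens ws \<in> tensor_span (map Vs (map lev ws))"
    unfolding tensor_span_def
    by (rule fun_space.span_base) (use len set assms(2) in \<open>auto simp: subset_iff\<close>)
  ultimately show ?thesis
    unfolding H_space_def by (meson UN_I fun_space.span_superset subsetD)
qed

lemma card_le_fdim_H_space:
  fixes C :: "('n::finite \<Rightarrow> 'k::field) set"
  assumes "finite C" "fun_space.independent C" "\<And>w. w \<in> C \<Longrightarrow> lev w \<in> {1..l} \<and> w \<in> Vs (lev w)"
  shows "card {ws\<in>lists_of m C. z \<le> sum_list (map (\<lambda>w. mu (lev w)) ws)} \<le> fdim (H_space l mu Vs m z)"
proof -
  let ?G = "{ws\<in>lists_of m C. z \<le> sum_list (map (\<lambda>w. mu (lev w)) ws)}"
  have "card ?G = card (tens ` ?G)"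
    by (intro card_image[symmetric] inj_on_subset[OF inj_on_tens[OF assms(1,2)]]) auto
  also have "\<dots> \<le> fdim (H_space l mu Vs m z)"
  proof (rule fun_space.card_le_dim_if_finite_span)
    show "fun_space.independent (tens ` ?G)"
      by (rule fun_space.independent_mono[OF independent_tens_image[OF assms(1,2)]]) auto
    show "tens ` ?G \<subseteq> H_space l mu Vs m z"
      using tens_in_H_space assms(3) by blast
    show "H_space l mu Vs m z \<subseteq> fspan (delta ` lists_of m UNIV)"
      using H_space_subset_tensor_power tensor_power_subset_span_delta by blast
  qed (simp add: finite_lists_of)
  finally show ?thesis .
qed

lemma fdim_H_space_ratio_bounds:
  fixes C :: "('n::finite \<Rightarrow> 'k::field) set"
  assumes "finite C" "fun_space.independent C" "card C = card (UNIV :: 'n set)"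
    and "\<And>w. w \<in> C \<Longrightarrow> lev w \<in> {1..l} \<and> w \<in> Vs (lev w)"
  shows "real (card {ws\<in>lists_of m C. z \<le> sum_list (map (\<lambda>w. mu (lev w)) ws)}) / real (card C) ^ m
           \<le> real (fdim (H_space l mu Vs m z)) / real (fdim (tensor_span (replicate m (UNIV :: ('n \<Rightarrow> 'k) set))))"
    and "real (fdim (H_space l mu Vs m z)) / real (fdim (tensor_span (replicate m (UNIV :: ('n \<Rightarrow> 'k) set)))) \<le> 1"
proof -
  let ?T = "tensor_span (replicate m (UNIV :: ('n \<Rightarrow> 'k) set))"
  have G_le_H: "card {ws\<in>lists_of m C. z \<le> sum_list (map (\<lambda>w. mu (lev w)) ws)} \<le> fdim (H_space l mu Vs m z)"
    using card_le_fdim_H_space[OF assms(1,2,4)] .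
  have H_le_T: "fdim (H_space l mu Vs m z) \<le> fdim ?T"
    using assms(4) fdim_H_space_le by blast
  have T_le: "fdim ?T \<le> card C ^ m"
    unfolding assms(3) by (rule fdim_tensor_power_le)
  show "real (card {ws\<in>lists_of m C. z \<le> sum_list (map (\<lambda>w. mu (lev w)) ws)}) / real (card C) ^ m
           \<le> real (fdim (H_space l mu Vs m z)) / real (fdim (tensor_span (replicate m (UNIV :: ('n \<Rightarrow> 'k) set))))"
  proof (cases "fdim ?T = 0")
    case True
    then show ?thesis
      using G_le_H H_le_T by simp
  next
    case False
    then show ?thesis
      using G_le_H T_le by (intro frac_le) (simp_all flip: of_nat_power)
  qed
  show "real (fdim (H_space l mu Vs m z)) / real (fdim (tensor_span (replicate m (UNIV :: ('n \<Rightarrow> 'k) set)))) \<le> 1"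
    using H_le_T by (auto simp: divide_le_eq_1)
qed

lemma HN_adapted_basis_exists:
  fixes Vs :: "nat \<Rightarrow> ('n::finite \<Rightarrow> 'k::field) set"
  assumes "is_HN_filtration n lam F l Vs"
  obtains C lev where "finite C" "fun_space.independent C" "card C = card (UNIV :: 'n set)"
    "\<And>w. w \<in> C \<Longrightarrow> lev w \<in> {1..l} \<and> w \<in> Vs (lev w)"
    "(\<Sum>w\<in>C. HN_mu n lam F Vs (lev w)) = (\<Sum>i=1..l. real (HN_r Vs i) * HN_mu n lam F Vs i)"
proof -
  have chain: "Vs 0 = {0}" "\<And>i. i < l \<Longrightarrow> Vs i \<subseteq> Vs (Suc i)" and "Vs l = UNIV"
    using assms unfolding is_HN_filtration_def by auto
  then have span: "Vs l \<subseteq> fspan (delta ` UNIV)"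
    by (auto intro!: in_span_delta_if_support_subset)
  obtain C lev where C: "finite C" "fun_space.independent C" "C \<subseteq> Vs l" "Vs l \<subseteq> fspan C"
    and lev: "\<And>w. w \<in> C \<Longrightarrow> lev w \<in> {1..l} \<and> w \<in> Vs (lev w)"
    and fibre: "\<And>i. i \<in> {1..l} \<Longrightarrow> card {w\<in>C. lev w = i} = fdim (Vs i) - fdim (Vs (i - 1))"
    using fun_space.adapted_basis_exists[OF chain span finite_imageI[OF finite_UNIV]] by blast
  have card_C: "card C = card (UNIV :: 'n set)"
    using fun_space.basis_card_eq_dim[OF C(3,4,2)] \<open>Vs l = UNIV\<close> fdim_UNIV by simp
  have "lev ` C \<subseteq> {1..l}"
    using lev by auto
  then have "(\<Sum>w\<in>C. HN_mu n lam F Vs (lev w))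
      = (\<Sum>i=1..l. real (card {w\<in>C. lev w = i}) * HN_mu n lam F Vs i)"
    by (rule sum_fun_comp[OF C(1) finite_atLeastAtMost])
  also have "\<dots> = (\<Sum>i=1..l. real (HN_r Vs i) * HN_mu n lam F Vs i)"
    by (intro sum.cong) (simp_all add: fibre HN_r_def)
  finally show thesis
    using that C(1,2) card_C lev by blast
qed

theorem theorem1p5:
  fixes n :: nat and lam :: "nat \<Rightarrow> real" and F :: "nat \<Rightarrow> ('n::finite \<Rightarrow> 'k::field_char_0) set"
    and l :: nat and Vs :: "nat \<Rightarrow> ('n \<Rightarrow> 'k) set" and z :: nat
  assumes "alg_closed TYPE('k)"
    and "is_filtration n lam F"
    and "is_HN_filtration n lam F l Vs"
    and "(\<Sum>i=1..l. real (HN_r Vs i) * HN_mu n lam F Vs i) > 0"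
  shows "(\<lambda>m. real (fdim (H_space l (HN_mu n lam F Vs) Vs m (real z)))
               / real (fdim (tensor_span (replicate m (UNIV :: ('n \<Rightarrow> 'k) set)))))
         \<longlonglongrightarrow> 1"
proof -
  let ?mu = "HN_mu n lam F Vs"
  obtain C lev where C: "finite C" "fun_space.independent C" "card C = card (UNIV :: 'n set)"
    and lev: "\<And>w. w \<in> C \<Longrightarrow> lev w \<in> {1..l} \<and> w \<in> Vs (lev w)"
    and "(\<Sum>w\<in>C. ?mu (lev w)) = (\<Sum>i=1..l. real (HN_r Vs i) * ?mu i)"
    using HN_adapted_basis_exists[OF assms(3)] by blast
  with assms(4) have lim: "(\<lambda>m. real (card {ws\<in>lists_of m C. real z \<le> sum_list (map (\<lambda>w. ?mu (lev w)) ws)})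
      / real (card C) ^ m) \<longlonglongrightarrow> 1"
    by (intro tendsto_card_lists_of_sum_list_ge) simp_all
  let ?ratio = "\<lambda>m. real (fdim (H_space l ?mu Vs m (real z)))
      / real (fdim (tensor_span (replicate m (UNIV :: ('n \<Rightarrow> 'k) set))))"
  have "real (card {ws\<in>lists_of m C. real z \<le> sum_list (map (\<lambda>w. ?mu (lev w)) ws)})
      / real (card C) ^ m \<le> ?ratio m" "?ratio m \<le> 1" for m
    using fdim_H_space_ratio_bounds[OF C lev, where mu = ?mu and z = "real z"] by simp_all
  then show ?thesis
    by (intro tendsto_sandwich[OF always_eventually always_eventually lim tendsto_const]) auto
qed

end
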